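(* Let $m\ge 1$, $M=2^m$, and let $P_{C_0}(0),\ldots,P_{C_{m-1}}(0)\in(0,1)$ be given, with $P_{C_k}(1)=1-P_{C_k}(0)$. Then for every $j\in\{0,\ldots,M-1\}$, $$\sum_{i=0}^{M-1}\gamma_{i,j}=M\sqrt{P_j},$$ and for every $k\in\{0,\ldots,m-1\}$, $$\sum_{i=0}^{M-1}(-1)^{n_{i,k}}\gamma_{i,j}=M(-1)^{n_{j,k}}\sqrt{P_j\,\frac{P_{C_k}(\bar n_{j,k})}{P_{C_k}(n_{j,k})}}.$$
   Context: For an integer $0\le i\le M-1$, $n_{i,k}\in\{0,1\}$ denotes the $k$-th bit of its base-2 representation, i.e. $i=\sum_{k=0}^{m-1}n_{i,k}2^k$; for a bit $b$, $\bar b=1-b$. The symbol probabilities are $P_i=\prod_{k=0}^{m-1}P_{C_k}(n_{i,k})$. The coefficients $\gamma_{i,j}$ are defined by $$\gamma_{i,j}=\prod_{k=0}^{m-1}\Big[(-1)^{\bar n_{i,k}n_{j,k}}\sqrt{P_{C_k}(0)}+(-1)^{n_{i,k}\bar n_{j,k}}\sqrt{P_{C_k}(1)}\Big].$$ *)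

theory Defs
  imports "HOL-Analysis.Analysis"
begin

definition nbit :: "nat \<Rightarrow> nat \<Rightarrow> nat" where
  "nbit i k = (i div 2 ^ k) mod 2"

definition bbar :: "nat \<Rightarrow> nat" where
  "bbar b = 1 - b"

definition PC :: "(nat \<Rightarrow> real) \<Rightarrow> nat \<Rightarrow> nat \<Rightarrow> real" where
  "PC p k b = (if b = 0 then p k else 1 - p k)"

definition Psym :: "nat \<Rightarrow> (nat \<Rightarrow> real) \<Rightarrow> nat \<Rightarrow> real" where
  "Psym m p i = (\<Prod>k<m. PC p k (nbit i k))"

definition gamma :: "nat \<Rightarrow> (nat \<Rightarrow> real) \<Rightarrow> nat \<Rightarrow> nat \<Rightarrow> real" where
  "gamma m p i j = (\<Prod>k<m.
      (-1) ^ (bbar (nbit i k) * nbit j k) * sqrt (PC p k 0)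
    + (-1) ^ (nbit i k * bbar (nbit j k)) * sqrt (PC p k 1))"

end

theory Submission
  imports Defs
begin

text \<open>The coefficient gamma i j is a product over l of factors F l b = gamma_factor p j l b, each depending only on
  the single bit b = nbit i l. Summing over all i < 2^m therefore factorises into the product of
  F l 0 + F l 1, and the sign (-1)^(nbit i k) merely turns the k-th factor into F k 0 - F k 1.
  A case distinction on nbit j l gives F l 0 + F l 1 = 2 sqrt (P_{C_l}(n_{j,l})) and
  F l 0 - F l 1 = 2 (-1)^(n_{j,l}) sqrt (P_{C_l}(bar n_{j,l})).\<close>

lemma sum_lessThan_double:
  "(\<Sum>i<2 * n. g i) = (\<Sum>i<n. g (2 * i) + g (2 * i + 1 :: nat))"
  by (induction n) (simp_all add: lessThan_Suc ac_simps)

lemma nbit_less_2: "nbit i k < 2"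
  by (simp add: nbit_def)

lemma nbit_double_add_0: "b < 2 \<Longrightarrow> nbit (2 * i + b) 0 = b"
  by (simp add: nbit_def)

lemma nbit_double_add_Suc: "b < 2 \<Longrightarrow> nbit (2 * i + b) (Suc k) = nbit i k"
  by (simp add: nbit_def div_mult2_eq)

lemma sum_prod_nbit:
  fixes f :: "nat \<Rightarrow> nat \<Rightarrow> 'a :: comm_semiring_1"
  shows "(\<Sum>i<2 ^ m. \<Prod>k<m. f k (nbit i k)) = (\<Prod>k<m. f k 0 + f k 1)"
proof (induction m arbitrary: f)
  case 0
  then show ?case by simp
next
  case (Suc m)
  have "(\<Sum>i<2 ^ Suc m. \<Prod>k<Suc m. f k (nbit i k))
      = (\<Sum>i<2 ^ m. (\<Prod>k<Suc m. f k (nbit (2 * i) k)) + (\<Prod>k<Suc m. f k (nbit (2 * i + 1) k)))"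
    by (simp add: sum_lessThan_double)
  also have "\<dots> = (\<Sum>i<2 ^ m. (f 0 0 + f 0 1) * (\<Prod>k<m. f (Suc k) (nbit i k)))"
    using nbit_double_add_0[of 0] nbit_double_add_Suc[of 0]
      nbit_double_add_0[of 1] nbit_double_add_Suc[of 1]
    by (simp only: prod.lessThan_Suc_shift) (simp add: distrib_right)
  also have "\<dots> = (f 0 0 + f 0 1) * (\<Prod>k<m. f (Suc k) 0 + f (Suc k) 1)"
    using Suc[of "\<lambda>k. f (Suc k)"] by (simp add: sum_distrib_left [symmetric])
  also have "\<dots> = (\<Prod>k<Suc m. f k 0 + f k 1)"
    by (simp only: prod.lessThan_Suc_shift)
  finally show ?case .
qed

lemma real_sqrt_prod: "sqrt (prod f A) = (\<Prod>x\<in>A. sqrt (f x))"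
  by (induction A rule: infinite_finite_induct) (auto simp: real_sqrt_mult)

lemma prod_replace_factor:
  fixes f :: "'b \<Rightarrow> 'a :: field"
  assumes "finite A" "k \<in> A" "f k \<noteq> 0"
  shows "(\<Prod>l\<in>A. if l = k then a else f l) = a * prod f A / f k"
proof -
  have "(\<Prod>l\<in>A. if l = k then a else f l) = a * (\<Prod>l\<in>A - {k}. f l)"
    using assms by (subst prod.remove[of _ k]) (auto intro!: prod.cong)
  moreover have "prod f A = f k * (\<Prod>l\<in>A - {k}. f l)"
    using assms by (simp add: prod.remove)
  ultimately show ?thesis
    using assms(3) by simp
qed

definition gamma_factor :: "(nat \<Rightarrow> real) \<Rightarrow> nat \<Rightarrow> nat \<Rightarrow> nat \<Rightarrow> real" where
  "gamma_factor p j l b = (-1) ^ (bbar b * nbit j l) * sqrt (PC p l 0)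
    + (-1) ^ (b * bbar (nbit j l)) * sqrt (PC p l 1)"

lemma gamma_eq_prod_gamma_factor: "gamma m p i j = (\<Prod>l<m. gamma_factor p j l (nbit i l))"
  by (simp add: gamma_def gamma_factor_def)

lemma gamma_factor_add:
  "gamma_factor p j l 0 + gamma_factor p j l 1 = 2 * sqrt (PC p l (nbit j l))"
  using nbit_less_2[of j l]
  by (cases "nbit j l = 0") (auto simp: gamma_factor_def bbar_def PC_def less_2_cases_iff)

lemma gamma_factor_diff:
  "gamma_factor p j l 0 - gamma_factor p j l 1
     = 2 * ((-1) ^ nbit j l * sqrt (PC p l (bbar (nbit j l))))"
  using nbit_less_2[of j l]
  by (cases "nbit j l = 0") (auto simp: gamma_factor_def bbar_def PC_def less_2_cases_iff)

lemma sum_gamma: "(\<Sum>i<2 ^ m. gamma m p i j) = 2 ^ m * sqrt (Psym m p j)"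
  unfolding gamma_eq_prod_gamma_factor sum_prod_nbit gamma_factor_add
  by (simp add: prod.distrib Psym_def real_sqrt_prod)

lemma signed_gamma_eq_prod:
  assumes "k < m"
  shows "(-1) ^ nbit i k * gamma m p i j
     = (\<Prod>l<m. (-1) ^ (if l = k then nbit i l else 0) * gamma_factor p j l (nbit i l))"
proof -
  have "(\<Prod>l<m. (-1 :: real) ^ (if l = k then nbit i l else 0))
      = (\<Prod>l<m. if l = k then (-1) ^ nbit i k else 1)"
    by (rule prod.cong) auto
  also have "\<dots> = (-1) ^ nbit i k"
    using assms by (simp add: prod.delta)
  finally show ?thesis
    by (simp add: prod.distrib gamma_eq_prod_gamma_factor)
qed

lemma sum_signed_gamma:
  assumes "k < m" and "PC p k (nbit j k) \<noteq> 0"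
  shows "(\<Sum>i<2 ^ m. (-1) ^ nbit i k * gamma m p i j)
     = 2 ^ m * (-1) ^ nbit j k *
       sqrt (Psym m p j * PC p k (bbar (nbit j k)) / PC p k (nbit j k))"
proof -
  let ?b = "nbit j k"
  have "(\<Sum>i<2 ^ m. (-1) ^ nbit i k * gamma m p i j)
      = (\<Prod>l<m. 2 * (if l = k then (-1) ^ ?b * sqrt (PC p k (bbar ?b))
                                   else sqrt (PC p l (nbit j l))))"
    unfolding signed_gamma_eq_prod[OF assms(1)]
      sum_prod_nbit[of "\<lambda>l b. (-1) ^ (if l = k then b else 0) * gamma_factor p j l b"]
    using gamma_factor_add gamma_factor_diff by (intro prod.cong) auto
  also have "\<dots> = 2 ^ m * ((-1) ^ ?b * sqrt (PC p k (bbar ?b)) * sqrt (Psym m p j) / sqrt (PC p k ?b))"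
    using assms by (simp add: prod.distrib prod_replace_factor Psym_def real_sqrt_prod)
  finally show ?thesis
    by (simp add: real_sqrt_mult real_sqrt_divide)
qed

theorem corollary1:
  fixes m :: nat and p :: "nat \<Rightarrow> real"
  assumes "m \<ge> 1"
    and "\<And>k. k < m \<Longrightarrow> 0 < p k \<and> p k < 1"
  shows "\<forall>j < 2 ^ m.
           (\<Sum>i<2 ^ m. gamma m p i j) = 2 ^ m * sqrt (Psym m p j)
         \<and> (\<forall>k < m. (\<Sum>i<2 ^ m. (-1) ^ nbit i k * gamma m p i j)
              = 2 ^ m * (-1) ^ nbit j k *
                sqrt (Psym m p j * PC p k (bbar (nbit j k)) / PC p k (nbit j k)))"
proof (intro allI impI conjI)
  fix j k assume "k < m"
  moreover have "PC p k (nbit j k) \<noteq> 0"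
    using assms(2)[OF \<open>k < m\<close>] by (auto simp: PC_def)
  ultimately show "(\<Sum>i<2 ^ m. (-1) ^ nbit i k * gamma m p i j)
      = 2 ^ m * (-1) ^ nbit j k *
        sqrt (Psym m p j * PC p k (bbar (nbit j k)) / PC p k (nbit j k))"
    by (rule sum_signed_gamma)
qed (rule sum_gamma)

end
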